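(* Let $Y$ be a Hausdorff space and $g:Y\to X/\!/G$ continuous. Then: (1) $\iota_g:W_g\to Y\times\mathbb C$ is a topological embedding, and under the homeomorphism $W_g\cong E_g:=\iota_g(W_g)$, the covering $\pi_W:W_g\to Y$ corresponds to the restriction of the first projection $p_1|_{E_g}:E_g\to Y$; in particular $p_1|_{E_g}$ is a covering space equivalent to $\pi_W$. (2) With $F:=\overline P\circ g:Y\to C^{lf}_\infty(\mathbb C)$, one has $E_g=\{(y,z)\in Y\times\mathbb C: z\in F(y)\}$, and $E_g$ is closed in $Y\times\mathbb C$.
   Context: $X=\mathrm{Conf}^{lf}_\infty(\mathbb C)$ is the space of sequences $(x_j)_{j\ge1}$ of pairwise distinct complex numbers with $\{j:|x_j|\le R\}$ finite for all $R$, metrized by $d_{\Sigma}(x,y)=\sum_j2^{-j}\min\{|x_j-y_j|,1\}+d_{\mathcal V}(P(x),P(y))$, where $P(x)=\{x_j\}\in C^{lf}_\infty(\mathbb C)$ (countably infinite locally finite subsets of $\mathbb C$, with the vague topology/vague metric $d_{\mathcal V}$). $G=\mathrm{Aut}(\mathbb N)$ discrete, acting by $\sigma\cdot(x_j)=(x_{\sigma(j)})$; $EG$ a contractible free right $G$-CW complex; $X/\!/G=(EG\times X)/G$ with $(e,x)\cdot\sigma=(e\sigma^{-1},\sigma\cdot x)$; the quotient $EG\times X\to X/\!/G$ is a principal $G$-bundle. $\overline P:X/\!/G\to C^{lf}_\infty(\mathbb C)$, $\overline P([e,x])=P(x)$. $P_g=g^*(EG\times X)\to Y$ is the pullback principal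 $G$-bundle (points $(y,e,x)$), $W_g=P_g\times_G\mathbb N$ (with $((y,e,x)\cdot\sigma,n)\sim((y,e,x),\sigma\cdot n)$), $\pi_W:W_g\to Y$ the projection, $\mathrm{ev}_g([(y,e,x),n])=x_n$, and $\iota_g(w)=(\pi_W(w),\mathrm{ev}_g(w))$. *)

theory Defs
  imports "HOL-Analysis.Analysis"
begin

definition Xset :: "(nat \<Rightarrow> complex) set" where
  "Xset = {x. inj x \<and> (\<forall>R::real. finite {j. cmod (x j) \<le> R})}"

definition Clf :: "complex set set" where
  "Clf = {S. infinite S \<and> countable S \<and> (\<forall>R::real. finite {z\<in>S. cmod z \<le> R})}"

definition Cc :: "(complex \<Rightarrow> real) set" where
  "Cc = {f. continuous_on UNIV f \<and> (\<exists>K. compact K \<and> (\<forall>z. z \<notin> K \<longrightarrow> f z = 0))}"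

text \<open>Integral of f against the counting measure of a locally finite set S.\<close>
definition pair_lf :: "(complex \<Rightarrow> real) \<Rightarrow> complex set \<Rightarrow> real" where
  "pair_lf f S = sum f {z\<in>S. f z \<noteq> 0}"

definition vague_top :: "complex set topology" where
  "vague_top = subtopology
     (topology_generated_by {{S. pair_lf f S \<in> U} | f U. f \<in> Cc \<and> open U}) Clf"

definition Pmap :: "(nat \<Rightarrow> complex) \<Rightarrow> complex set" where
  "Pmap x = range x"

text \<open>Topology of d_Sigma: join of the product topology and the pullback of the vague topology.\<close>
definition Xtop :: "(nat \<Rightarrow> complex) topology" where
  "Xtop = subtopology
     (topology_generated_by
        ({{x. x j \<in> U} | j U. open U} \<union> {{x. Pmap x \<in> V} | V. openin vague_top V})) Xset"

definition Aut :: "(nat \<Rightarrow> nat) set" where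
  "Aut = {\<sigma>. bij \<sigma>}"

text \<open>Free, properly discontinuous right action of Aut(N) on E by homeomorphisms
  (right action law matching x \<cdot> \<sigma> = x \<circ> \<sigma>).\<close>
definition free_proper_right_action :: "'e topology \<Rightarrow> ('e \<Rightarrow> (nat \<Rightarrow> nat) \<Rightarrow> 'e) \<Rightarrow> bool" where
  "free_proper_right_action E act \<longleftrightarrow>
     (\<forall>\<sigma>\<in>Aut. continuous_map E E (\<lambda>e. act e \<sigma>)) \<and>
     (\<forall>e\<in>topspace E. act e id = e) \<and>
     (\<forall>e\<in>topspace E. \<forall>\<sigma>\<in>Aut. \<forall>\<tau>\<in>Aut. act (act e \<sigma>) \<tau> = act e (\<sigma> \<circ> \<tau>)) \<and>
     (\<forall>e\<in>topspace E. \<exists>U. openin E U \<and> e \<in> U \<and>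
         (\<forall>\<sigma>\<in>Aut. \<sigma> \<noteq> id \<longrightarrow> (\<lambda>e. act e \<sigma>) ` U \<inter> U = {}))"

text \<open>Abstract stand-in for a contractible free right G-CW complex EG.\<close>
definition EG_space :: "'e topology \<Rightarrow> ('e \<Rightarrow> (nat \<Rightarrow> nat) \<Rightarrow> 'e) \<Rightarrow> bool" where
  "EG_space E act \<longleftrightarrow> Hausdorff_space E \<and> contractible_space E \<and> free_proper_right_action E act"

definition qtop :: "'a topology \<Rightarrow> ('a \<Rightarrow> 'b) \<Rightarrow> 'b topology" where
  "qtop T q = topology (\<lambda>U. U \<subseteq> q ` topspace T \<and> openin T {p \<in> topspace T. q p \<in> U})"

text \<open>The G-orbit of (e,x) in EG \<times> X, i.e. the point [e,x] of X//G.\<close>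
definition cls :: "('e \<Rightarrow> (nat \<Rightarrow> nat) \<Rightarrow> 'e) \<Rightarrow> 'e \<times> (nat \<Rightarrow> complex) \<Rightarrow> ('e \<times> (nat \<Rightarrow> complex)) set" where
  "cls act p = {(act (fst p) \<sigma>, snd p \<circ> \<sigma>) | \<sigma>. \<sigma> \<in> Aut}"

definition XG_top :: "'e topology \<Rightarrow> ('e \<Rightarrow> (nat \<Rightarrow> nat) \<Rightarrow> 'e) \<Rightarrow> ('e \<times> (nat \<Rightarrow> complex)) set topology" where
  "XG_top E act = qtop (prod_topology E Xtop) (cls act)"

text \<open>Pbar([e,x]) = P(x).\<close>
definition Pbar :: "('e \<times> (nat \<Rightarrow> complex)) set \<Rightarrow> complex set" where
  "Pbar c = Pmap (snd (SOME p. p \<in> c))"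

definition Pg_top :: "'y topology \<Rightarrow> 'e topology \<Rightarrow> ('e \<Rightarrow> (nat \<Rightarrow> nat) \<Rightarrow> 'e)
    \<Rightarrow> ('y \<Rightarrow> ('e \<times> (nat \<Rightarrow> complex)) set) \<Rightarrow> ('y \<times> 'e \<times> (nat \<Rightarrow> complex)) topology" where
  "Pg_top Y E act g = subtopology (prod_topology Y (prod_topology E Xtop))
     {(y, p). y \<in> topspace Y \<and> p \<in> topspace (prod_topology E Xtop) \<and> g y = cls act p}"

text \<open>Class of ((y,e,x),n) in P_g \<times>_G N: ((y,e,x)\<cdot>\<sigma>, m) \<sim> ((y,e,x), \<sigma> m).\<close>
definition Wcls :: "('e \<Rightarrow> (nat \<Rightarrow> nat) \<Rightarrow> 'e) \<Rightarrow> ('y \<times> 'e \<times> (nat \<Rightarrow> complex)) \<times> nat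
    \<Rightarrow> (('y \<times> 'e \<times> (nat \<Rightarrow> complex)) \<times> nat) set" where
  "Wcls act q = (case q of ((y, e, x), n) \<Rightarrow>
     {((y, act e \<sigma>, x \<circ> \<sigma>), inv \<sigma> n) | \<sigma>. \<sigma> \<in> Aut})"

definition W_top :: "'y topology \<Rightarrow> 'e topology \<Rightarrow> ('e \<Rightarrow> (nat \<Rightarrow> nat) \<Rightarrow> 'e)
    \<Rightarrow> ('y \<Rightarrow> ('e \<times> (nat \<Rightarrow> complex)) set)
    \<Rightarrow> (('y \<times> 'e \<times> (nat \<Rightarrow> complex)) \<times> nat) set topology" where
  "W_top Y E act g = qtop (prod_topology (Pg_top Y E act g) (discrete_topology UNIV)) (Wcls act)"

definition piW :: "(('y \<times> 'e \<times> (nat \<Rightarrow> complex)) \<times> nat) set \<Rightarrow> 'y" where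
  "piW w = fst (fst (SOME p. p \<in> w))"

definition evW :: "(('y \<times> 'e \<times> (nat \<Rightarrow> complex)) \<times> nat) set \<Rightarrow> complex" where
  "evW w = (case (SOME p. p \<in> w) of ((y, e, x), n) \<Rightarrow> x n)"

definition iotaW :: "(('y \<times> 'e \<times> (nat \<Rightarrow> complex)) \<times> nat) set \<Rightarrow> 'y \<times> complex" where
  "iotaW w = (piW w, evW w)"

definition Eg :: "'y topology \<Rightarrow> 'e topology \<Rightarrow> ('e \<Rightarrow> (nat \<Rightarrow> nat) \<Rightarrow> 'e)
    \<Rightarrow> ('y \<Rightarrow> ('e \<times> (nat \<Rightarrow> complex)) set) \<Rightarrow> ('y \<times> complex) set" where
  "Eg Y E act g = iotaW ` topspace (W_top Y E act g)"

definition covering_map :: "'a topology \<Rightarrow> 'b topology \<Rightarrow> ('a \<Rightarrow> 'b) \<Rightarrow> bool" where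
  "covering_map C B p \<longleftrightarrow> continuous_map C B p \<and> p ` topspace C = topspace B \<and>
     (\<forall>b\<in>topspace B. \<exists>U. openin B U \<and> b \<in> U \<and>
        (\<exists>\<V>. \<Union>\<V> = {c \<in> topspace C. p c \<in> U} \<and> pairwise disjnt \<V> \<and>
             (\<forall>V\<in>\<V>. openin C V \<and> homeomorphic_map (subtopology C V) (subtopology B U) p)))"

end

(*
  Properness of the action of Aut(N) on EG gives, around every point of EG \<times> X, an open slice S
  meeting each orbit at most once. Over the open set of those y for which g y lies in the image of
  S in X//G, g lifts uniquely and continuously to a section sec y \<in> S. For fixed n the classes
  [(y, sec y), n] then form an open sheet that \<pi>_W maps homeomorphically onto this set; sheets
  with different n are disjoint, so \<pi>_W is a covering.

  The map \<iota>_g is injective because configurations are injective sequences. It is open because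
  the vague topology controls multiplicities: testing against a bump at x_n, which equals 1 near
  x_n, a nearby configuration has only one coordinate close to x_n, so near \<iota>_g(w) the set E_g
  is the image of a sheet. In the same way a bump at z \<notin> F(y) keeps all configurations vaguely
  close to F(y) away from z, which makes E_g closed.
*)

theory Submission
  imports Defs
begin

section \<open>Quotient topologies\<close>

lemma openin_qtop:
  "openin (qtop T q) U \<longleftrightarrow> U \<subseteq> q ` topspace T \<and> openin T {p \<in> topspace T. q p \<in> U}"
proof -
  have Int: "{p \<in> topspace T. q p \<in> S \<inter> U} = {p \<in> topspace T. q p \<in> S} \<inter> {p \<in> topspace T. q p \<in> U}"
    for S U by auto
  have Union: "{p \<in> topspace T. q p \<in> \<Union>\<K>} = (\<Union>S\<in>\<K>. {p \<in> topspace T. q p \<in> S})" for \<K> by auto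
  have "istopology (\<lambda>U. U \<subseteq> q ` topspace T \<and> openin T {p \<in> topspace T. q p \<in> U})"
    unfolding istopology_def Int Union by auto
  then show ?thesis
    unfolding qtop_def by simp
qed

lemma topspace_qtop [simp]: "topspace (qtop T q) = q ` topspace T"
proof -
  have "{p \<in> topspace T. q p \<in> q ` topspace T} = topspace T"
    by auto
  then have "openin (qtop T q) (q ` topspace T)"
    by (simp add: openin_qtop)
  then show ?thesis
    using openin_qtop[of T q "topspace (qtop T q)"] openin_subset by blast
qed

lemma quotient_map_qtop: "quotient_map T (qtop T q) q"
  unfolding quotient_map_def openin_qtop by auto

lemma continuous_map_from_qtop:
  "continuous_map T Z (\<lambda>p. f (q p)) \<Longrightarrow> continuous_map (qtop T q) Z f"
  by (rule continuous_compose_quotient_map[OF quotient_map_qtop]) (simp add: o_def)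

section \<open>The topologies of X and of the vague topology\<close>

definition X_subbasis :: "(nat \<Rightarrow> complex) set set" where
  "X_subbasis = {{x. x j \<in> U} | j U. open U} \<union> {{x. Pmap x \<in> V} | V. openin vague_top V}"

definition vague_subbasis :: "complex set set set" where
  "vague_subbasis = {{S. pair_lf f S \<in> U} | f U. f \<in> Cc \<and> open U}"

lemma Xtop_eq: "Xtop = subtopology (topology_generated_by X_subbasis) Xset"
  unfolding Xtop_def X_subbasis_def ..

lemma vague_top_eq: "vague_top = subtopology (topology_generated_by vague_subbasis) Clf"
  unfolding vague_top_def vague_subbasis_def ..

lemma topspace_Xtop [simp]: "topspace Xtop = Xset"
proof -
  have "UNIV \<in> X_subbasis"
    unfolding X_subbasis_def by blast
  then show ?thesis
    unfolding Xtop_eq by auto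
qed

lemma topspace_vague_top [simp]: "topspace vague_top = Clf"
proof -
  have "(\<lambda>_. 0) \<in> Cc"
    unfolding Cc_def by (auto intro!: exI[of _ "{}"])
  then have "UNIV \<in> vague_subbasis"
    unfolding vague_subbasis_def by (auto intro!: exI[of _ "\<lambda>_. 0"] exI[of _ UNIV])
  then show ?thesis
    unfolding vague_top_eq by auto
qed

lemma Pmap_in_Clf: "x \<in> Xset \<Longrightarrow> Pmap x \<in> Clf"
proof -
  assume x: "x \<in> Xset"
  have "{z \<in> range x. cmod z \<le> R} = x ` {j. cmod (x j) \<le> R}" for R
    by auto
  moreover have "infinite (range x)"
    using x finite_imageD by (auto simp: Xset_def)
  ultimately show ?thesis
    using x by (simp add: Clf_def Pmap_def Xset_def)
qed

lemma openin_Xtop_coordinate: "open U \<Longrightarrow> openin Xtop {x \<in> Xset. x j \<in> U}"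
proof -
  assume "open U"
  then have "{x. x j \<in> U} \<in> X_subbasis"
    unfolding X_subbasis_def by blast
  then show ?thesis
    unfolding Xtop_eq openin_subtopology by (auto intro!: topology_generated_by_Basis)
qed

lemma openin_Xtop_Pmap: "openin vague_top V \<Longrightarrow> openin Xtop {x \<in> Xset. Pmap x \<in> V}"
proof -
  assume "openin vague_top V"
  then have "{x. Pmap x \<in> V} \<in> X_subbasis"
    unfolding X_subbasis_def by blast
  then show ?thesis
    unfolding Xtop_eq openin_subtopology by (auto intro!: topology_generated_by_Basis)
qed

lemma openin_vague_top_pair_lf:
  "f \<in> Cc \<Longrightarrow> open U \<Longrightarrow> openin vague_top {S \<in> Clf. pair_lf f S \<in> U}"
proof -
  assume "f \<in> Cc" "open U"
  then have "{S. pair_lf f S \<in> U} \<in> vague_subbasis"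
    unfolding vague_subbasis_def by blast
  then show ?thesis
    unfolding vague_top_eq openin_subtopology by (auto intro!: topology_generated_by_Basis)
qed

lemma continuous_map_Xtop_coordinate: "continuous_map Xtop euclidean (\<lambda>x. x j)"
  unfolding continuous_map_def using openin_Xtop_coordinate by auto

lemma continuous_map_Pmap: "continuous_map Xtop vague_top Pmap"
  unfolding continuous_map_def using openin_Xtop_Pmap Pmap_in_Clf by auto

lemma Pmap_comp_bij: "bij \<sigma> \<Longrightarrow> Pmap (x \<circ> \<sigma>) = Pmap x"
  unfolding Pmap_def by (metis bij_is_surj image_comp)

lemma Xset_comp_bij: "x \<in> Xset \<Longrightarrow> bij \<sigma> \<Longrightarrow> x \<circ> \<sigma> \<in> Xset"
proof -
  assume x: "x \<in> Xset" and \<sigma>: "bij \<sigma>"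
  have "finite (\<sigma> -` {j. cmod (x j) \<le> R})" for R
    using x bij_is_inj[OF \<sigma>] by (intro finite_vimageI) (auto simp: Xset_def)
  moreover have "{j. cmod ((x \<circ> \<sigma>) j) \<le> R} = \<sigma> -` {j. cmod (x j) \<le> R}" for R
    by auto
  ultimately have "finite {j. cmod ((x \<circ> \<sigma>) j) \<le> R}" for R
    by simp
  then show ?thesis
    using x \<sigma> by (auto simp: Xset_def bij_is_inj inj_compose)
qed

lemma continuous_map_Xtop_comp_bij:
  assumes \<sigma>: "bij \<sigma>"
  shows "continuous_map Xtop Xtop (\<lambda>x. x \<circ> \<sigma>)"
proof -
  have "openin Xtop ((\<lambda>x. x \<circ> \<sigma>) -` W \<inter> Xset)" if "W \<in> X_subbasis" for W
  proof -
    from that consider j U where "open U" "W = {x. x j \<in> U}"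
      | V where "openin vague_top V" "W = {x. Pmap x \<in> V}"
      unfolding X_subbasis_def by blast
    then show ?thesis
    proof cases
      case 1
      then have "(\<lambda>x. x \<circ> \<sigma>) -` W \<inter> Xset = {x \<in> Xset. x (\<sigma> j) \<in> U}"
        by auto
      then show ?thesis
        using openin_Xtop_coordinate[OF 1(1)] by simp
    next
      case 2
      then have "(\<lambda>x. x \<circ> \<sigma>) -` W \<inter> Xset = {x \<in> Xset. Pmap x \<in> V}"
        using Pmap_comp_bij[OF \<sigma>] by auto
      then show ?thesis
        using openin_Xtop_Pmap[OF 2(1)] by simp
    qed
  qed
  then have "continuous_map Xtop (topology_generated_by X_subbasis) (\<lambda>x. x \<circ> \<sigma>)"
    by (intro continuous_on_generated_topo) (auto simp: X_subbasis_def)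
  then show ?thesis
    unfolding Xtop_eq[of] continuous_map_in_subtopology
    using Xset_comp_bij[OF _ \<sigma>] by (auto simp: Xtop_eq[symmetric])
qed

definition bump :: "complex \<Rightarrow> real \<Rightarrow> complex \<Rightarrow> real" where
  "bump a r z = min 1 (max 0 (2 - cmod (z - a) / r))"

lemma bump_nonneg: "0 \<le> bump a r z"
  unfolding bump_def by simp

lemma bump_eq_1: "r > 0 \<Longrightarrow> cmod (z - a) < r \<Longrightarrow> bump a r z = 1"
  unfolding bump_def by (simp add: field_simps)

lemma bump_eq_0: "r > 0 \<Longrightarrow> 2 * r \<le> cmod (z - a) \<Longrightarrow> bump a r z = 0"
  unfolding bump_def by (simp add: field_simps)

lemma bump_in_Cc:
  assumes "r > 0"
  shows "bump a r \<in> Cc"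
proof -
  have "continuous_on UNIV (bump a r)"
    unfolding bump_def using assms by (intro continuous_intros) auto
  moreover have "\<forall>z. z \<notin> cball a (2 * r) \<longrightarrow> bump a r z = 0"
    using assms by (auto intro!: bump_eq_0 simp: dist_norm norm_minus_commute)
  ultimately show ?thesis
    unfolding Cc_def using compact_cball by blast
qed

lemma Clf_finite_support:
  assumes S: "S \<in> Clf" and f: "f \<in> Cc"
  shows "finite {z \<in> S. f z \<noteq> 0}"
proof -
  obtain K where K: "compact K" "\<And>z. z \<notin> K \<Longrightarrow> f z = 0"
    using f unfolding Cc_def by blast
  obtain R where "\<And>z. z \<in> K \<Longrightarrow> cmod z \<le> R"
    using compact_imp_bounded[OF K(1)] unfolding bounded_iff by blast
  then have "{z \<in> S. f z \<noteq> 0} \<subseteq> {z \<in> S. cmod z \<le> R}"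
    using K(2) by blast
  then show ?thesis
    using S finite_subset by (auto simp: Clf_def)
qed

lemma sum_le_pair_lf:
  assumes S: "S \<in> Clf" and f: "f \<in> Cc" "\<And>z. 0 \<le> f z" and A: "A \<subseteq> S" "finite A"
  shows "sum f A \<le> pair_lf f S"
proof -
  define B where "B = {z \<in> S. f z \<noteq> 0}"
  have B: "finite B"
    unfolding B_def using Clf_finite_support[OF S f(1)] .
  have "sum f A \<le> sum f (A \<union> B)"
    using B A f(2) by (intro sum_mono2) auto
  also have "\<dots> = sum f B"
    by (rule sum.mono_neutral_left[symmetric]) (use B A in \<open>auto simp: B_def\<close>)
  finally show ?thesis
    unfolding pair_lf_def B_def .
qed

lemma locally_finite_separated:
  assumes lf: "\<And>R. finite {z \<in> S. cmod z \<le> R}"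
  shows "\<exists>r>0. \<forall>z\<in>S. z \<noteq> a \<longrightarrow> 2 * r < cmod (z - a)"
proof -
  define D where "D = (\<lambda>z. cmod (z - a)) ` {z \<in> S. z \<noteq> a \<and> cmod z \<le> cmod a + 1}"
  have D: "finite D"
    unfolding D_def using lf[of "cmod a + 1"]
    by (intro finite_imageI) (rule finite_subset[of _ "{z \<in> S. cmod z \<le> cmod a + 1}"], auto)
  define m where "m = Min (insert 1 D)"
  have m: "0 < m" "m \<le> 1" "\<And>d. d \<in> D \<Longrightarrow> m \<le> d"
    unfolding m_def using D by (auto simp: D_def)
  have "2 * (m / 3) < cmod (z - a)" if z: "z \<in> S" "z \<noteq> a" for z
  proof (cases "cmod z \<le> cmod a + 1")
    case True
    then have "m \<le> cmod (z - a)"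
      using z by (intro m(3)) (auto simp: D_def)
    then show ?thesis
      using m(1) by simp
  next
    case False
    then show ?thesis
      using norm_triangle_ineq2[of z a] m(1,2) by simp
  qed
  then show ?thesis
    using m(1) by (intro exI[of _ "m / 3"]) auto
qed

text \<open>Near a configuration \<open>x\<^sub>0\<close>, the vague condition \<open>pair_lf f < 3/2\<close> for a bump \<open>f\<close> at \<open>x\<^sub>0 n\<close>
  keeps a second coordinate out of the ball on which \<open>f = 1\<close>.\<close>

lemma Xtop_nhd_isolating_coordinate:
  assumes x0: "x0 \<in> Xset"
  shows "\<exists>N r. openin Xtop N \<and> x0 \<in> N \<and> r > 0 \<and>
     (\<forall>x\<in>N. \<forall>j. cmod (x j - x0 n) < r \<longrightarrow> j = n)"
proof -
  define a where "a = x0 n"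
  have S0: "Pmap x0 \<in> Clf"
    using Pmap_in_Clf[OF x0] .
  obtain r where r: "r > 0" "\<And>z. z \<in> Pmap x0 \<Longrightarrow> z \<noteq> a \<Longrightarrow> 2 * r < cmod (z - a)"
    using locally_finite_separated[of "Pmap x0" a] S0 by (auto simp: Clf_def)
  define f where "f = bump a r"
  have f: "f \<in> Cc" "\<And>z. 0 \<le> f z"
    unfolding f_def using bump_in_Cc[OF r(1)] bump_nonneg by auto
  have "{z \<in> Pmap x0. f z \<noteq> 0} = {a}"
    using r by (force simp: f_def a_def Pmap_def bump_eq_1 intro: bump_eq_0 less_imp_le)
  then have p0: "pair_lf f (Pmap x0) = 1"
    unfolding pair_lf_def f_def using r(1) by (simp add: bump_eq_1)
  define N where "N = {x \<in> Xset. Pmap x \<in> {S \<in> Clf. pair_lf f S \<in> {..<3/2}}} \<inter> {x \<in> Xset. x n \<in> ball a r}"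
  have "openin Xtop N"
    unfolding N_def by (intro openin_Int openin_Xtop_Pmap openin_Xtop_coordinate openin_vague_top_pair_lf f) auto
  moreover have "x0 \<in> N"
    unfolding N_def using x0 S0 p0 r(1) by (simp add: a_def)
  moreover have "\<forall>j. cmod (x j - a) < r \<longrightarrow> j = n" if x: "x \<in> N" for x
  proof -
    have xX: "x \<in> Xset" and px: "pair_lf f (Pmap x) < 3/2" and xn: "cmod (x n - a) < r"
      using x unfolding N_def by (auto simp: dist_norm norm_minus_commute)
    have "j = n" if j: "cmod (x j - a) < r" for j
    proof (rule ccontr)
      assume "j \<noteq> n"
      then have "x j \<noteq> x n"
        using xX by (auto simp: Xset_def inj_eq)
      then have "sum f {x j, x n} = 2"
        using j xn r(1) by (simp add: f_def bump_eq_1)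
      moreover have "sum f {x j, x n} \<le> pair_lf f (Pmap x)"
        using Pmap_in_Clf[OF xX] f by (intro sum_le_pair_lf) (auto simp: Pmap_def)
      ultimately show False
        using px by simp
    qed
    then show ?thesis
      by blast
  qed
  ultimately show ?thesis
    using r(1) unfolding a_def by blast
qed

lemma vague_top_nhd_avoiding:
  assumes S: "S \<in> Clf" and z0: "z0 \<notin> S"
  shows "\<exists>V r. openin vague_top V \<and> S \<in> V \<and> r > 0 \<and> (\<forall>T\<in>V. \<forall>z\<in>T. r \<le> cmod (z - z0))"
proof -
  obtain r where r: "r > 0" "\<And>z. z \<in> S \<Longrightarrow> z \<noteq> z0 \<Longrightarrow> 2 * r < cmod (z - z0)"
    using locally_finite_separated[of S z0] S by (auto simp: Clf_def)
  define f where "f = bump z0 r"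
  have f: "f \<in> Cc" "\<And>z. 0 \<le> f z"
    unfolding f_def using bump_in_Cc[OF r(1)] bump_nonneg by auto
  have "{z \<in> S. f z \<noteq> 0} = {}"
    using r z0 by (force simp: f_def intro: bump_eq_0 less_imp_le)
  then have p0: "pair_lf f S = 0"
    unfolding pair_lf_def by simp
  define V where "V = {T \<in> Clf. pair_lf f T \<in> {..<1}}"
  have "openin vague_top V"
    unfolding V_def by (intro openin_vague_top_pair_lf f) auto
  moreover have "S \<in> V"
    unfolding V_def using S p0 by simp
  moreover have "r \<le> cmod (z - z0)" if T: "T \<in> V" and z: "z \<in> T" for T z
  proof (rule ccontr)
    assume "\<not> r \<le> cmod (z - z0)"
    then have "f z = 1"
      unfolding f_def using r(1) by (simp add: bump_eq_1)
    moreover have "sum f {z} \<le> pair_lf f T"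
      using T z f unfolding V_def by (intro sum_le_pair_lf) auto
    ultimately show False
      using T unfolding V_def by simp
  qed
  ultimately show ?thesis
    using r(1) by blast
qed

section \<open>Covering maps\<close>

definition evenly_covered :: "'a topology \<Rightarrow> 'b topology \<Rightarrow> ('a \<Rightarrow> 'b) \<Rightarrow> 'b set \<Rightarrow> bool" where
  "evenly_covered C B p U \<longleftrightarrow>
     (\<exists>\<V>. \<Union>\<V> = {c \<in> topspace C. p c \<in> U} \<and> pairwise disjnt \<V> \<and>
        (\<forall>V\<in>\<V>. openin C V \<and> homeomorphic_map (subtopology C V) (subtopology B U) p))"

lemma covering_map_iff_evenly_covered:
  "covering_map C B p \<longleftrightarrow> continuous_map C B p \<and> p ` topspace C = topspace B \<and>
     (\<forall>b\<in>topspace B. \<exists>U. openin B U \<and> b \<in> U \<and> evenly_covered C B p U)"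
  unfolding covering_map_def evenly_covered_def ..

lemma evenly_covered_eq:
  assumes p: "evenly_covered C B p U" and eq: "\<And>c. c \<in> topspace C \<Longrightarrow> p c = q c"
  shows "evenly_covered C B q U"
proof -
  obtain \<V> where \<V>: "\<Union>\<V> = {c \<in> topspace C. p c \<in> U}" "pairwise disjnt \<V>"
    "\<And>V. V \<in> \<V> \<Longrightarrow> openin C V \<and> homeomorphic_map (subtopology C V) (subtopology B U) p"
    using p unfolding evenly_covered_def by meson
  have "{c \<in> topspace C. q c \<in> U} = {c \<in> topspace C. p c \<in> U}"
    using eq by auto
  moreover have "homeomorphic_map (subtopology C V) (subtopology B U) q" if "V \<in> \<V>" for V
    using \<V>(3)[OF that] by (auto intro: homeomorphic_map_eq simp: eq)
  ultimately show ?thesis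
    unfolding evenly_covered_def using \<V> by (intro exI[of _ \<V>]) simp
qed

lemma covering_map_eq:
  assumes p: "covering_map C B p" and eq: "\<And>c. c \<in> topspace C \<Longrightarrow> p c = q c"
  shows "covering_map C B q"
proof -
  have "continuous_map C B p \<and> p ` topspace C = topspace B \<and>
      (\<forall>b\<in>topspace B. \<exists>U. openin B U \<and> b \<in> U \<and> evenly_covered C B p U)"
    using p unfolding covering_map_iff_evenly_covered .
  then have cont: "continuous_map C B p" and surj: "p ` topspace C = topspace B"
    and even: "\<And>b. b \<in> topspace B \<Longrightarrow> \<exists>U. openin B U \<and> b \<in> U \<and> evenly_covered C B p U"
    by simp_all
  have "continuous_map C B q"
    using cont by (rule continuous_map_eq) (simp add: eq)
  moreover have "q ` topspace C = p ` topspace C"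
    using eq by auto
  moreover have "\<exists>U. openin B U \<and> b \<in> U \<and> evenly_covered C B q U" if b: "b \<in> topspace B" for b
  proof -
    obtain U where U: "openin B U" "b \<in> U" "evenly_covered C B p U"
      using even[OF b] by blast
    then show ?thesis
      using evenly_covered_eq[OF U(3) eq] by blast
  qed
  ultimately show ?thesis
    unfolding covering_map_iff_evenly_covered using surj by (intro conjI ballI) simp_all
qed

lemma evenly_covered_compose_homeomorphic:
  assumes p: "evenly_covered C B p U" and h: "homeomorphic_map C' C h"
  shows "evenly_covered C' B (p \<circ> h) U"
proof -
  have hc: "continuous_map C' C h" and hs: "h ` topspace C' = topspace C"
    using h by (auto simp: homeomorphic_imp_continuous_map homeomorphic_imp_surjective_map)
  obtain \<V> where \<V>: "\<Union>\<V> = {c \<in> topspace C. p c \<in> U}" "pairwise disjnt \<V>"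
    "\<And>V. V \<in> \<V> \<Longrightarrow> openin C V \<and> homeomorphic_map (subtopology C V) (subtopology B U) p"
    using p unfolding evenly_covered_def by meson
  define pre where "pre V = {c \<in> topspace C'. h c \<in> V}" for V
  have "\<Union>(pre ` \<V>) = {c \<in> topspace C'. h c \<in> \<Union>\<V>}"
    by (auto simp: pre_def)
  also have "\<dots> = {c \<in> topspace C'. (p \<circ> h) c \<in> U}"
    using \<V>(1) hs by auto
  finally have "\<Union>(pre ` \<V>) = {c \<in> topspace C'. (p \<circ> h) c \<in> U}" .
  moreover have "pairwise disjnt (pre ` \<V>)"
    using \<V>(2) by (intro pairwise_imageI) (auto simp: pre_def pairwise_def disjnt_def)
  moreover have "openin C' (pre V) \<and> homeomorphic_map (subtopology C' (pre V)) (subtopology B U) (p \<circ> h)"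
    if V: "V \<in> \<V>" for V
  proof
    show "openin C' (pre V)"
      unfolding pre_def using \<V>(3)[OF V] hc by (blast intro: openin_continuous_map_preimage)
    have "h ` (topspace C' \<inter> pre V) = topspace C \<inter> V"
      using hs by (auto simp: pre_def)
    with h have "homeomorphic_map (subtopology C' (pre V)) (subtopology C V) h"
      by (rule homeomorphic_map_subtopologies)
    then show "homeomorphic_map (subtopology C' (pre V)) (subtopology B U) (p \<circ> h)"
      using \<V>(3)[OF V] by (blast intro: homeomorphic_map_compose)
  qed
  ultimately show ?thesis
    unfolding evenly_covered_def by (intro exI[of _ "pre ` \<V>"] conjI ballI) auto
qed

lemma covering_map_compose_homeomorphic:
  assumes p: "covering_map C B p" and h: "homeomorphic_map C' C h"
  shows "covering_map C' B (p \<circ> h)"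
proof -
  have "continuous_map C B p \<and> p ` topspace C = topspace B \<and>
      (\<forall>b\<in>topspace B. \<exists>U. openin B U \<and> b \<in> U \<and> evenly_covered C B p U)"
    using p unfolding covering_map_iff_evenly_covered .
  then have cont: "continuous_map C B p" and surj: "p ` topspace C = topspace B"
    and even: "\<And>b. b \<in> topspace B \<Longrightarrow> \<exists>U. openin B U \<and> b \<in> U \<and> evenly_covered C B p U"
    by simp_all
  have "continuous_map C' B (p \<circ> h)"
    using homeomorphic_imp_continuous_map[OF h] cont by (rule continuous_map_compose)
  moreover have "(p \<circ> h) ` topspace C' = p ` topspace C"
    by (metis homeomorphic_imp_surjective_map[OF h] image_comp)
  moreover have "\<exists>U. openin B U \<and> b \<in> U \<and> evenly_covered C' B (p \<circ> h) U" if b: "b \<in> topspace B" for b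
  proof -
    obtain U where U: "openin B U" "b \<in> U" "evenly_covered C B p U"
      using even[OF b] by blast
    then show ?thesis
      using evenly_covered_compose_homeomorphic[OF U(3) h] by blast
  qed
  ultimately show ?thesis
    unfolding covering_map_iff_evenly_covered using surj by (intro conjI ballI) simp_all
qed

section \<open>The action of Aut(N) and the homotopy quotient\<close>

lemma Aut_iff [simp]: "\<sigma> \<in> Aut \<longleftrightarrow> bij \<sigma>"
  unfolding Aut_def by simp

lemma orbit_eq_iff:
  assumes id: "\<And>a. a \<in> S \<Longrightarrow> A a id = a"
    and comp: "\<And>a \<sigma> \<tau>. a \<in> S \<Longrightarrow> bij \<sigma> \<Longrightarrow> bij \<tau> \<Longrightarrow> A (A a \<sigma>) \<tau> = A a (\<sigma> \<circ> \<tau>)"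
    and a: "a \<in> S" and b: "b \<in> S"
  shows "{A a \<sigma> | \<sigma>. \<sigma> \<in> Aut} = {A b \<sigma> | \<sigma>. \<sigma> \<in> Aut} \<longleftrightarrow> (\<exists>\<sigma>\<in>Aut. b = A a \<sigma>)"
proof
  assume orbits: "{A a \<sigma> | \<sigma>. \<sigma> \<in> Aut} = {A b \<sigma> | \<sigma>. \<sigma> \<in> Aut}"
  have "b \<in> {A b \<sigma> | \<sigma>. \<sigma> \<in> Aut}"
    using id[OF b] by (auto intro!: exI[of _ id])
  then have "b \<in> {A a \<sigma> | \<sigma>. \<sigma> \<in> Aut}"
    unfolding orbits .
  then show "\<exists>\<sigma>\<in>Aut. b = A a \<sigma>"
    by auto
next
  assume "\<exists>\<sigma>\<in>Aut. b = A a \<sigma>"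
  then obtain \<sigma> where \<sigma>: "bij \<sigma>" "b = A a \<sigma>"
    by auto
  have b_act: "A b \<tau> = A a (\<sigma> \<circ> \<tau>)" if "bij \<tau>" for \<tau>
    using comp[OF a \<sigma>(1) that] \<sigma>(2) by simp
  have "A a \<tau> = A b (inv \<sigma> \<circ> \<tau>)" if "bij \<tau>" for \<tau>
  proof -
    have "\<sigma> \<circ> (inv \<sigma> \<circ> \<tau>) = \<tau>"
      using \<sigma>(1) by (simp add: o_assoc bij_is_surj[THEN surj_iff[THEN iffD1]])
    then show ?thesis
      using b_act[of "inv \<sigma> \<circ> \<tau>"] that \<sigma>(1) by (simp add: bij_comp bij_imp_bij_inv)
  qed
  then show "{A a \<sigma> | \<sigma>. \<sigma> \<in> Aut} = {A b \<sigma> | \<sigma>. \<sigma> \<in> Aut}"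
    using b_act \<sigma>(1) by (auto intro: bij_comp bij_imp_bij_inv)
qed

locale EG_action =
  fixes EG :: "'e topology" and act :: "'e \<Rightarrow> (nat \<Rightarrow> nat) \<Rightarrow> 'e"
  assumes EG_space: "EG_space EG act"
begin

abbreviation EGX :: "('e \<times> (nat \<Rightarrow> complex)) topology" where
  "EGX \<equiv> prod_topology EG Xtop"

abbreviation XG :: "('e \<times> (nat \<Rightarrow> complex)) set topology" where
  "XG \<equiv> XG_top EG act"

lemma continuous_map_act: "bij \<sigma> \<Longrightarrow> continuous_map EG EG (\<lambda>e. act e \<sigma>)"
  and act_id: "e \<in> topspace EG \<Longrightarrow> act e id = e"
  and act_act: "e \<in> topspace EG \<Longrightarrow> bij \<sigma> \<Longrightarrow> bij \<tau> \<Longrightarrow> act (act e \<sigma>) \<tau> = act e (\<sigma> \<circ> \<tau>)"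
  and act_proper: "e \<in> topspace EG \<Longrightarrow>
    \<exists>U. openin EG U \<and> e \<in> U \<and> (\<forall>\<sigma>\<in>Aut. \<sigma> \<noteq> id \<longrightarrow> (\<lambda>e. act e \<sigma>) ` U \<inter> U = {})"
  using EG_space unfolding EG_space_def free_proper_right_action_def by auto

definition diag_act :: "'e \<times> (nat \<Rightarrow> complex) \<Rightarrow> (nat \<Rightarrow> nat) \<Rightarrow> 'e \<times> (nat \<Rightarrow> complex)" where
  "diag_act p \<sigma> = (act (fst p) \<sigma>, snd p \<circ> \<sigma>)"

lemma cls_eq_orbit: "cls act p = {diag_act p \<sigma> | \<sigma>. \<sigma> \<in> Aut}"
  unfolding cls_def diag_act_def ..

lemma diag_act_in: "p \<in> topspace EGX \<Longrightarrow> bij \<sigma> \<Longrightarrow> diag_act p \<sigma> \<in> topspace EGX"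
  using continuous_map_act Xset_comp_bij
  by (fastforce simp: diag_act_def continuous_map_def)

lemma diag_act_id: "p \<in> topspace EGX \<Longrightarrow> diag_act p id = p"
  by (auto simp: diag_act_def act_id)

lemma diag_act_act:
  "p \<in> topspace EGX \<Longrightarrow> bij \<sigma> \<Longrightarrow> bij \<tau> \<Longrightarrow> diag_act (diag_act p \<sigma>) \<tau> = diag_act p (\<sigma> \<circ> \<tau>)"
  by (auto simp: diag_act_def act_act o_assoc)

lemma cls_eq_iff:
  "p \<in> topspace EGX \<Longrightarrow> q \<in> topspace EGX \<Longrightarrow> cls act p = cls act q \<longleftrightarrow> (\<exists>\<sigma>\<in>Aut. q = diag_act p \<sigma>)"
  unfolding cls_eq_orbit by (rule orbit_eq_iff[where S="topspace EGX" and A=diag_act, OF diag_act_id diag_act_act])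

lemma in_cls: "p \<in> topspace EGX \<Longrightarrow> p \<in> cls act p"
  unfolding cls_eq_orbit by (auto simp: diag_act_id intro!: exI[of _ id])

lemma continuous_map_diag_act:
  assumes \<sigma>: "bij \<sigma>"
  shows "continuous_map EGX EGX (\<lambda>p. diag_act p \<sigma>)"
proof -
  have "continuous_map EGX EG ((\<lambda>e. act e \<sigma>) \<circ> fst)"
    using continuous_map_fst continuous_map_act[OF \<sigma>] by (rule continuous_map_compose)
  moreover have "continuous_map EGX Xtop ((\<lambda>x. x \<circ> \<sigma>) \<circ> snd)"
    using continuous_map_snd continuous_map_Xtop_comp_bij[OF \<sigma>] by (rule continuous_map_compose)
  ultimately show ?thesis
    unfolding diag_act_def by (intro continuous_map_pairedI) (simp_all add: o_def)
qed

lemma homeomorphic_map_diag_act: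
  assumes \<sigma>: "bij \<sigma>"
  shows "homeomorphic_map EGX EGX (\<lambda>p. diag_act p \<sigma>)"
proof -
  have "inv \<sigma> \<circ> \<sigma> = id" "\<sigma> \<circ> inv \<sigma> = id"
    using \<sigma> by (simp_all add: bij_is_inj bij_is_surj inj_iff[THEN iffD1] surj_iff[THEN iffD1])
  then have "homeomorphic_maps EGX EGX (\<lambda>p. diag_act p \<sigma>) (\<lambda>p. diag_act p (inv \<sigma>))"
    unfolding homeomorphic_maps_def using \<sigma>
    by (auto simp: continuous_map_diag_act bij_imp_bij_inv diag_act_act diag_act_id)
  then show ?thesis
    using homeomorphic_map_maps by blast
qed

lemma openin_diag_act_image: "bij \<sigma> \<Longrightarrow> openin EGX W \<Longrightarrow> openin EGX ((\<lambda>p. diag_act p \<sigma>) ` W)"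
  using homeomorphic_map_openness[OF homeomorphic_map_diag_act openin_subset] by blast

lemma topspace_XG: "topspace XG = cls act ` topspace EGX"
  unfolding XG_top_def by simp

lemma openin_XG_cls_image:
  assumes W: "openin EGX W"
  shows "openin XG (cls act ` W)"
proof -
  have W_sub: "W \<subseteq> topspace EGX"
    using openin_subset[OF W] .
  have "{p \<in> topspace EGX. cls act p \<in> cls act ` W} = (\<Union>\<sigma>\<in>Aut. (\<lambda>p. diag_act p \<sigma>) ` W)"
  proof (intro set_eqI iffI)
    fix p
    assume "p \<in> {p \<in> topspace EGX. cls act p \<in> cls act ` W}"
    then obtain w where p: "p \<in> topspace EGX" and w: "w \<in> W" "cls act w = cls act p"
      by auto
    moreover have "w \<in> topspace EGX"
      using w W_sub by blast
    ultimately obtain \<sigma> where "\<sigma> \<in> Aut" "p = diag_act w \<sigma>"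
      using cls_eq_iff[of w p] by metis
    with w(1) show "p \<in> (\<Union>\<sigma>\<in>Aut. (\<lambda>p. diag_act p \<sigma>) ` W)"
      by blast
  next
    fix p
    assume "p \<in> (\<Union>\<sigma>\<in>Aut. (\<lambda>p. diag_act p \<sigma>) ` W)"
    then obtain \<sigma> w where \<sigma>: "\<sigma> \<in> Aut" and w: "w \<in> W" and p: "p = diag_act w \<sigma>"
      by blast
    have w_in: "w \<in> topspace EGX"
      using w W_sub by blast
    then have p_in: "p \<in> topspace EGX"
      using \<sigma> p diag_act_in by simp
    have "cls act w = cls act p"
      using cls_eq_iff[OF w_in p_in] \<sigma> p by blast
    with w p_in show "p \<in> {p \<in> topspace EGX. cls act p \<in> cls act ` W}"
      by blast
  qed
  moreover have "openin EGX (\<Union>\<sigma>\<in>Aut. (\<lambda>p. diag_act p \<sigma>) ` W)"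
    using W by (intro openin_Union) (auto intro: openin_diag_act_image)
  ultimately show ?thesis
    unfolding XG_top_def openin_qtop using W_sub by (simp add: image_mono)
qed

lemma Pbar_cls:
  assumes p: "p \<in> topspace EGX"
  shows "Pbar (cls act p) = Pmap (snd p)"
proof -
  define q where "q = (SOME q. q \<in> cls act p)"
  have "q \<in> cls act p"
    unfolding q_def using in_cls[OF p] by (rule someI)
  then obtain \<sigma> where "bij \<sigma>" "q = diag_act p \<sigma>"
    unfolding cls_eq_orbit by auto
  then show ?thesis
    unfolding Pbar_def q_def[symmetric] by (simp add: diag_act_def Pmap_comp_bij)
qed

lemma continuous_map_Pbar: "continuous_map XG vague_top Pbar"
  unfolding XG_top_def
proof (rule continuous_map_from_qtop)
  show "continuous_map EGX vague_top (\<lambda>p. Pbar (cls act p))"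
    using continuous_map_compose[OF continuous_map_snd continuous_map_Pmap]
    by (rule continuous_map_eq) (simp add: Pbar_cls)
qed

definition slice :: "('e \<times> (nat \<Rightarrow> complex)) set \<Rightarrow> bool" where
  "slice S \<longleftrightarrow> openin EGX S \<and> (\<forall>p\<in>S. \<forall>\<sigma>\<in>Aut. diag_act p \<sigma> \<in> S \<longrightarrow> \<sigma> = id)"

lemma exists_slice:
  assumes p: "p \<in> topspace EGX"
  shows "\<exists>S. slice S \<and> p \<in> S"
proof -
  obtain U where U: "openin EG U" "fst p \<in> U" "\<And>\<sigma>. bij \<sigma> \<Longrightarrow> \<sigma> \<noteq> id \<Longrightarrow> (\<lambda>e. act e \<sigma>) ` U \<inter> U = {}"
    using act_proper[of "fst p"] p by auto
  have "openin EGX (U \<times> Xset)"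
    using U(1) openin_topspace[of Xtop] by (simp add: openin_prod_Times_iff)
  moreover have "\<sigma> = id" if q: "q \<in> U \<times> Xset" "bij \<sigma>" "diag_act q \<sigma> \<in> U \<times> Xset" for q \<sigma>
  proof (rule ccontr)
    assume "\<sigma> \<noteq> id"
    moreover have "act (fst q) \<sigma> \<in> (\<lambda>e. act e \<sigma>) ` U \<inter> U"
      using q by (auto simp: diag_act_def mem_Times_iff)
    ultimately show False
      using U(3) q(2) by blast
  qed
  ultimately have "slice (U \<times> Xset)"
    unfolding slice_def by auto
  then show ?thesis
    using U(2) p by (auto simp: mem_Times_iff)
qed

lemma slice_cls_inj:
  assumes S: "slice S" and p: "p \<in> S" and q: "q \<in> S" and eq: "cls act p = cls act q"
  shows "p = q"
proof -
  have S_sub: "S \<subseteq> topspace EGX"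
    using S openin_subset unfolding slice_def by blast
  obtain \<sigma> where \<sigma>: "\<sigma> \<in> Aut" "q = diag_act p \<sigma>"
    using cls_eq_iff[of p q] eq p q S_sub by blast
  then have "\<sigma> = id"
    using S p q unfolding slice_def by blast
  then show ?thesis
    using \<sigma>(2) diag_act_id p S_sub by auto
qed

end

section \<open>The associated bundle W_g\<close>

locale pulled_back = EG_action EG act for EG :: "'e topology" and act +
  fixes Y :: "'y topology" and g :: "'y \<Rightarrow> ('e \<times> (nat \<Rightarrow> complex)) set"
  assumes continuous_map_g: "continuous_map Y XG g"
begin

abbreviation Pg :: "('y \<times> 'e \<times> (nat \<Rightarrow> complex)) topology" where
  "Pg \<equiv> Pg_top Y EG act g"

abbreviation PgN :: "(('y \<times> 'e \<times> (nat \<Rightarrow> complex)) \<times> nat) topology" where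
  "PgN \<equiv> prod_topology Pg (discrete_topology UNIV)"

abbreviation Wg :: "(('y \<times> 'e \<times> (nat \<Rightarrow> complex)) \<times> nat) set topology" where
  "Wg \<equiv> W_top Y EG act g"

lemma mem_topspace_Pg [simp]:
  "b \<in> topspace Pg \<longleftrightarrow> fst b \<in> topspace Y \<and> snd b \<in> topspace EGX \<and> g (fst b) = cls act (snd b)"
  unfolding Pg_top_def by (cases b) auto

lemma topspace_Wg: "topspace Wg = Wcls act ` topspace PgN"
  unfolding W_top_def by simp

lemma exists_cls_eq_g: "y \<in> topspace Y \<Longrightarrow> \<exists>p\<in>topspace EGX. g y = cls act p"
  using continuous_map_image_subset_topspace[OF continuous_map_g] unfolding topspace_XG by blast

definition bundle_act ::
    "('y \<times> 'e \<times> (nat \<Rightarrow> complex)) \<times> nat \<Rightarrow> (nat \<Rightarrow> nat) \<Rightarrow> ('y \<times> 'e \<times> (nat \<Rightarrow> complex)) \<times> nat" where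
  "bundle_act a \<sigma> = ((fst (fst a), diag_act (snd (fst a)) \<sigma>), inv \<sigma> (snd a))"

lemma bundle_act_Pair [simp]: "bundle_act ((y, p), n) \<sigma> = ((y, diag_act p \<sigma>), inv \<sigma> n)"
  unfolding bundle_act_def by simp

lemma Wcls_eq_orbit: "Wcls act a = {bundle_act a \<sigma> | \<sigma>. \<sigma> \<in> Aut}"
proof -
  obtain y e x n where "a = ((y, e, x), n)"
    by (metis prod.collapse)
  then show ?thesis
    by (simp add: Wcls_def diag_act_def)
qed

lemma bundle_act_id: "a \<in> topspace PgN \<Longrightarrow> bundle_act a id = a"
  by (simp add: bundle_act_def diag_act_id mem_Times_iff)

lemma bundle_act_act:
  "a \<in> topspace PgN \<Longrightarrow> bij \<sigma> \<Longrightarrow> bij \<tau> \<Longrightarrow> bundle_act (bundle_act a \<sigma>) \<tau> = bundle_act a (\<sigma> \<circ> \<tau>)"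
  by (simp add: bundle_act_def diag_act_act o_inv_distrib mem_Times_iff)

lemma Wcls_eq_iff:
  "a \<in> topspace PgN \<Longrightarrow> b \<in> topspace PgN \<Longrightarrow> Wcls act a = Wcls act b \<longleftrightarrow> (\<exists>\<sigma>\<in>Aut. b = bundle_act a \<sigma>)"
  unfolding Wcls_eq_orbit
  by (rule orbit_eq_iff[where S="topspace PgN" and A=bundle_act, OF bundle_act_id bundle_act_act])

lemma in_Wcls: "a \<in> topspace PgN \<Longrightarrow> a \<in> Wcls act a"
  unfolding Wcls_eq_orbit mem_Collect_eq using bundle_act_id by (intro exI[of _ id]) simp

lemma Wcls_representative:
  assumes "a \<in> topspace PgN"
  obtains \<sigma> where "bij \<sigma>" "(SOME b. b \<in> Wcls act a) = bundle_act a \<sigma>"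
proof -
  have "(SOME b. b \<in> Wcls act a) \<in> Wcls act a"
    using in_Wcls[OF assms] by (rule someI)
  then show ?thesis
    using that unfolding Wcls_eq_orbit by auto
qed

lemma piW_Wcls:
  assumes "((y, p), n) \<in> topspace PgN"
  shows "piW (Wcls act ((y, p), n)) = y"
  using assms by (rule Wcls_representative) (simp add: piW_def)

lemma evW_Wcls:
  assumes "((y, p), n) \<in> topspace PgN"
  shows "evW (Wcls act ((y, p), n)) = snd p n"
  using assms
  by (rule Wcls_representative) (simp add: evW_def diag_act_def bij_is_surj surj_f_inv_f split: prod.split)

lemma iotaW_Wcls: "((y, p), n) \<in> topspace PgN \<Longrightarrow> iotaW (Wcls act ((y, p), n)) = (y, snd p n)"
  by (simp add: iotaW_def piW_Wcls evW_Wcls)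

lemma Pbar_eq_range: "g y = cls act p \<Longrightarrow> p \<in> topspace EGX \<Longrightarrow> Pbar (g y) = range (snd p)"
  by (simp add: Pbar_cls Pmap_def)

lemma continuous_map_piW: "continuous_map Wg Y piW"
  unfolding W_top_def
proof (rule continuous_map_from_qtop)
  have "continuous_map Pg Y fst"
    unfolding Pg_top_def by (intro continuous_map_from_subtopology continuous_map_fst)
  then have "continuous_map PgN Y (fst \<circ> fst)"
    by (intro continuous_map_compose[OF continuous_map_fst])
  then show "continuous_map PgN Y (\<lambda>a. piW (Wcls act a))"
    by (rule continuous_map_eq) (auto simp: piW_Wcls mem_Times_iff)
qed

lemma continuous_map_evW: "continuous_map Wg euclidean evW"
  unfolding W_top_def
proof (rule continuous_map_from_qtop)
  have coord: "continuous_map Pg euclidean (\<lambda>b. snd (snd b) m)" for m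
  proof -
    have "continuous_map (prod_topology Y EGX) Xtop (snd \<circ> snd)"
      using continuous_map_snd continuous_map_snd by (rule continuous_map_compose)
    then have "continuous_map (prod_topology Y EGX) euclidean ((\<lambda>x. x m) \<circ> (snd \<circ> snd))"
      using continuous_map_Xtop_coordinate by (rule continuous_map_compose)
    then show ?thesis
      unfolding Pg_top_def by (auto intro: continuous_map_from_subtopology simp: o_def)
  qed
  have "openin PgN {a \<in> topspace PgN. snd (snd (fst a)) (snd a) \<in> U}" if U: "openin euclidean U" for U
  proof -
    have eq: "{a \<in> topspace PgN. snd (snd (fst a)) (snd a) \<in> U} =
        (\<Union>m. {b \<in> topspace Pg. snd (snd b) m \<in> U} \<times> {m})"
      by (auto simp: mem_Times_iff)
    have "openin PgN ({b \<in> topspace Pg. snd (snd b) m \<in> U} \<times> {m})" for m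
      using openin_continuous_map_preimage[OF coord U] by (simp add: openin_prod_Times_iff)
    then show ?thesis
      unfolding eq by (intro openin_Union) blast
  qed
  then have "continuous_map PgN euclidean (\<lambda>a. snd (snd (fst a)) (snd a))"
    unfolding continuous_map_def by simp
  then show "continuous_map PgN euclidean (\<lambda>a. evW (Wcls act a))"
    by (rule continuous_map_eq) (auto simp: evW_Wcls mem_Times_iff)
qed

lemma continuous_map_iotaW: "continuous_map Wg (prod_topology Y euclidean) iotaW"
  unfolding iotaW_def by (intro continuous_map_pairedI continuous_map_piW continuous_map_evW)

lemma Eg_eq: "Eg Y EG act g = {(y, z). y \<in> topspace Y \<and> z \<in> Pbar (g y)}"
proof (intro set_eqI iffI)
  fix q
  assume "q \<in> Eg Y EG act g"
  then obtain y p n where a: "((y, p), n) \<in> topspace PgN" and q: "q = iotaW (Wcls act ((y, p), n))"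
    unfolding Eg_def topspace_Wg by auto
  then show "q \<in> {(y, z). y \<in> topspace Y \<and> z \<in> Pbar (g y)}"
    by (simp add: iotaW_Wcls Pbar_cls Pmap_def)
next
  fix q
  assume "q \<in> {(y, z). y \<in> topspace Y \<and> z \<in> Pbar (g y)}"
  then obtain y z where q: "q = (y, z)" and y: "y \<in> topspace Y" and z: "z \<in> Pbar (g y)"
    by blast
  obtain p where p: "p \<in> topspace EGX" "g y = cls act p"
    using exists_cls_eq_g[OF y] by blast
  obtain n where n: "z = snd p n"
    using z Pbar_eq_range[OF p(2,1)] by auto
  have a: "((y, p), n) \<in> topspace PgN"
    using y p by simp
  then have "Wcls act ((y, p), n) \<in> topspace Wg"
    unfolding topspace_Wg by blast
  moreover have "iotaW (Wcls act ((y, p), n)) = q"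
    using iotaW_Wcls[OF a] q n by simp
  ultimately show "q \<in> Eg Y EG act g"
    unfolding Eg_def by blast
qed

lemma inj_on_iotaW: "inj_on iotaW (topspace Wg)"
proof (rule inj_onI)
  fix u v
  assume "u \<in> topspace Wg" "v \<in> topspace Wg" and eq: "iotaW u = iotaW v"
  then obtain y p n y' p' m where a: "((y, p), n) \<in> topspace PgN" "u = Wcls act ((y, p), n)"
    and b: "((y', p'), m) \<in> topspace PgN" "v = Wcls act ((y', p'), m)"
    unfolding topspace_Wg by auto
  have y: "y' = y" and x: "snd p n = snd p' m"
    using eq a(1) b(1) unfolding a(2) b(2) by (simp_all add: iotaW_Wcls)
  obtain \<sigma> where \<sigma>: "bij \<sigma>" "p' = diag_act p \<sigma>"
    using cls_eq_iff[of p p'] a(1) b(1) y by auto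
  have "inj (snd p)"
    using a(1) by (auto simp: Xset_def mem_Times_iff)
  moreover have "snd p n = snd p (\<sigma> m)"
    using x \<sigma>(2) by (simp add: diag_act_def)
  ultimately have "m = inv \<sigma> n"
    using \<sigma>(1) by (simp add: inj_eq bij_is_inj)
  then have "((y', p'), m) = bundle_act ((y, p), n) \<sigma>"
    using y \<sigma>(2) by simp
  then show "u = v"
    using Wcls_eq_iff[OF a(1) b(1)] \<sigma>(1) a(2) b(2) by auto
qed

lemma Eg_complement_nhd:
  assumes q: "q \<in> topspace Y \<times> UNIV - Eg Y EG act g"
  shows "\<exists>T. openin (prod_topology Y euclidean) T \<and> q \<in> T \<and> T \<subseteq> topspace Y \<times> UNIV - Eg Y EG act g"
proof -
  have F: "continuous_map Y vague_top (\<lambda>y. Pbar (g y))"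
    using continuous_map_compose[OF continuous_map_g continuous_map_Pbar] by (simp add: o_def)
  obtain y0 z0 where q_eq: "q = (y0, z0)" and y0: "y0 \<in> topspace Y" and z0: "z0 \<notin> Pbar (g y0)"
    using q unfolding Eg_eq by auto
  have "Pbar (g y0) \<in> Clf"
    using continuous_map_image_subset_topspace[OF F] y0 by auto
  then obtain V r where V: "openin vague_top V" "Pbar (g y0) \<in> V" "r > 0"
    and far: "\<And>S z. S \<in> V \<Longrightarrow> z \<in> S \<Longrightarrow> r \<le> cmod (z - z0)"
    using vague_top_nhd_avoiding[OF _ z0] by blast
  define T where "T = {y \<in> topspace Y. Pbar (g y) \<in> V} \<times> ball z0 r"
  have "openin (prod_topology Y euclidean) T"
    unfolding T_def using openin_continuous_map_preimage[OF F V(1)] by (simp add: openin_prod_Times_iff)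
  moreover have "q \<in> T"
    unfolding T_def q_eq using y0 V(2,3) by simp
  moreover have "T \<subseteq> topspace Y \<times> UNIV - Eg Y EG act g"
  proof
    fix q'
    assume "q' \<in> T"
    then obtain y z where q': "q' = (y, z)" "y \<in> topspace Y" "Pbar (g y) \<in> V" "cmod (z - z0) < r"
      unfolding T_def by (auto simp: dist_norm norm_minus_commute)
    then have "z \<notin> Pbar (g y)"
      using far by force
    then show "q' \<in> topspace Y \<times> UNIV - Eg Y EG act g"
      unfolding Eg_eq using q' by auto
  qed
  ultimately show ?thesis
    by blast
qed

lemma closedin_Eg: "closedin (prod_topology Y euclidean) (Eg Y EG act g)"
proof -
  have "openin (prod_topology Y euclidean) (topspace Y \<times> UNIV - Eg Y EG act g)"
    using Eg_complement_nhd by (subst openin_subopen) blast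
  moreover have "Eg Y EG act g \<subseteq> topspace Y \<times> UNIV"
    unfolding Eg_eq by auto
  ultimately show ?thesis
    unfolding closedin_def by simp
qed

end

section \<open>Local trivialisations over slices\<close>

locale pulled_back_chart = pulled_back EG act Y g
  for EG :: "'e topology" and act and Y :: "'y topology" and g +
  fixes S :: "('e \<times> (nat \<Rightarrow> complex)) set"
  assumes slice_S: "slice S"
begin

lemma S_sub: "S \<subseteq> topspace EGX"
  using slice_S openin_subset unfolding slice_def by blast

definition base :: "'y set" where
  "base = {y \<in> topspace Y. g y \<in> cls act ` S}"

definition sec :: "'y \<Rightarrow> 'e \<times> (nat \<Rightarrow> complex)" where
  "sec y = (SOME p. p \<in> S \<and> cls act p = g y)"

definition lift :: "nat \<Rightarrow> 'y \<Rightarrow> (('y \<times> 'e \<times> (nat \<Rightarrow> complex)) \<times> nat) set" where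
  "lift n y = Wcls act ((y, sec y), n)"

definition sheet :: "nat \<Rightarrow> (('y \<times> 'e \<times> (nat \<Rightarrow> complex)) \<times> nat) set set" where
  "sheet n = lift n ` base"

lemma openin_base: "openin Y base"
proof -
  have "openin XG (cls act ` S)"
    using slice_S unfolding slice_def by (blast intro: openin_XG_cls_image)
  then show ?thesis
    unfolding base_def by (rule openin_continuous_map_preimage[OF continuous_map_g])
qed

lemma base_sub: "base \<subseteq> topspace Y"
  unfolding base_def by blast

lemma sec_spec: "y \<in> base \<Longrightarrow> sec y \<in> S \<and> cls act (sec y) = g y"
  unfolding base_def sec_def by (rule someI_ex) auto

lemma sec_unique:
  assumes "y \<in> base" "p \<in> S" "cls act p = g y"
  shows "sec y = p"
  using sec_spec[OF assms(1)] assms(2,3) by (intro slice_cls_inj[OF slice_S]) simp_all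

lemma continuous_map_sec: "continuous_map (subtopology Y base) EGX sec"
  unfolding continuous_map_def
proof (intro conjI allI impI)
  show "sec \<in> topspace (subtopology Y base) \<rightarrow> topspace EGX"
    using sec_spec S_sub by auto
  fix U
  assume U: "openin EGX U"
  define A where "A = {y \<in> topspace Y. g y \<in> cls act ` (U \<inter> S)}"
  have "{y \<in> topspace (subtopology Y base). sec y \<in> U} = A"
  proof (intro set_eqI iffI)
    fix y
    assume "y \<in> {y \<in> topspace (subtopology Y base). sec y \<in> U}"
    then show "y \<in> A"
      unfolding A_def using sec_spec[of y] base_sub by (auto intro: rev_image_eqI)
  next
    fix y
    assume "y \<in> A"
    then obtain p where p: "y \<in> topspace Y" "p \<in> U" "p \<in> S" "g y = cls act p"
      unfolding A_def by blast
    then have "y \<in> base"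
      unfolding base_def by blast
    with p show "y \<in> {y \<in> topspace (subtopology Y base). sec y \<in> U}"
      using sec_unique by auto
  qed
  moreover have "openin XG (cls act ` (U \<inter> S))"
    using U slice_S unfolding slice_def by (blast intro: openin_XG_cls_image)
  then have "openin Y A"
    unfolding A_def by (rule openin_continuous_map_preimage[OF continuous_map_g])
  moreover have "A \<subseteq> base"
    unfolding A_def base_def by blast
  ultimately show "openin (subtopology Y base) {y \<in> topspace (subtopology Y base). sec y \<in> U}"
    unfolding openin_subtopology by blast
qed

lemma sec_point_in_PgN: "y \<in> base \<Longrightarrow> ((y, sec y), n) \<in> topspace PgN"
  using sec_spec base_sub S_sub by auto

lemma piW_lift: "y \<in> base \<Longrightarrow> piW (lift n y) = y"
  unfolding lift_def by (rule piW_Wcls[OF sec_point_in_PgN])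

lemma iotaW_lift: "y \<in> base \<Longrightarrow> iotaW (lift n y) = (y, snd (sec y) n)"
  unfolding lift_def by (rule iotaW_Wcls[OF sec_point_in_PgN])

lemma sheet_sub: "sheet n \<subseteq> topspace Wg"
  unfolding sheet_def lift_def topspace_Wg using sec_point_in_PgN by blast

lemma continuous_map_lift: "continuous_map (subtopology Y base) Wg (lift n)"
proof -
  have "continuous_map (subtopology Y base) (prod_topology Y EGX) (\<lambda>y. (y, sec y))"
    by (intro continuous_map_pairedI continuous_map_sec continuous_map_from_subtopology)
      simp
  then have "continuous_map (subtopology Y base) Pg (\<lambda>y. (y, sec y))"
    unfolding Pg_top_def continuous_map_in_subtopology using sec_spec S_sub by auto
  then have "continuous_map (subtopology Y base) PgN (\<lambda>y. ((y, sec y), n))"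
    by (intro continuous_map_pairedI) simp_all
  then have "continuous_map (subtopology Y base) Wg (Wcls act \<circ> (\<lambda>y. ((y, sec y), n)))"
    using quotient_imp_continuous_map[OF quotient_map_qtop] unfolding W_top_def
    by (rule continuous_map_compose)
  then show ?thesis
    by (simp add: lift_def[abs_def] o_def)
qed

lemma Wcls_in_sheet_iff:
  assumes a: "((y, p), m) \<in> topspace PgN"
  shows "Wcls act ((y, p), m) \<in> sheet n \<longleftrightarrow> (\<exists>\<sigma>\<in>Aut. p \<in> (\<lambda>q. diag_act q \<sigma>) ` S \<and> m = inv \<sigma> n)"
proof
  assume "Wcls act ((y, p), m) \<in> sheet n"
  then obtain y' where y': "y' \<in> base" "Wcls act ((y, p), m) = Wcls act ((y', sec y'), n)"
    unfolding sheet_def lift_def by auto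
  then obtain \<sigma> where "\<sigma> \<in> Aut" "((y, p), m) = bundle_act ((y', sec y'), n) \<sigma>"
    using Wcls_eq_iff[OF sec_point_in_PgN a] by metis
  then show "\<exists>\<sigma>\<in>Aut. p \<in> (\<lambda>q. diag_act q \<sigma>) ` S \<and> m = inv \<sigma> n"
    using sec_spec[OF y'(1)] by auto
next
  assume "\<exists>\<sigma>\<in>Aut. p \<in> (\<lambda>q. diag_act q \<sigma>) ` S \<and> m = inv \<sigma> n"
  then obtain \<sigma> s where \<sigma>: "bij \<sigma>" and s: "s \<in> S" and p: "p = diag_act s \<sigma>" and m: "m = inv \<sigma> n"
    by auto
  have s_in: "s \<in> topspace EGX"
    using s S_sub by blast
  have p_in: "p \<in> topspace EGX" and gy: "g y = cls act p" and y: "y \<in> topspace Y"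
    using a by auto
  have s_cls: "cls act s = g y"
    using cls_eq_iff[OF s_in p_in] \<sigma> p gy by auto
  then have y_base: "y \<in> base"
    unfolding base_def using y s by force
  have "sec y = s"
    using sec_unique[OF y_base s s_cls] .
  then have "((y, p), m) = bundle_act ((y, sec y), n) \<sigma>"
    using p m by simp
  then have "lift n y = Wcls act ((y, p), m)"
    unfolding lift_def using \<sigma> by (intro Wcls_eq_iff[OF sec_point_in_PgN[OF y_base] a, THEN iffD2]) auto
  then show "Wcls act ((y, p), m) \<in> sheet n"
    unfolding sheet_def using y_base by (metis image_eqI)
qed

lemma openin_sheet: "openin Wg (sheet n)"
proof -
  define R where "R \<sigma> = (\<lambda>q. diag_act q \<sigma>) ` S" for \<sigma>
  have "{a \<in> topspace PgN. Wcls act a \<in> sheet n} =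
      (\<Union>\<sigma>\<in>Aut. {b \<in> topspace Pg. snd b \<in> R \<sigma>} \<times> {inv \<sigma> n})"
  proof (intro set_eqI iffI)
    fix a
    assume a: "a \<in> {a \<in> topspace PgN. Wcls act a \<in> sheet n}"
    obtain y p m where a_eq: "a = ((y, p), m)"
      by (metis prod.collapse)
    then show "a \<in> (\<Union>\<sigma>\<in>Aut. {b \<in> topspace Pg. snd b \<in> R \<sigma>} \<times> {inv \<sigma> n})"
      using a Wcls_in_sheet_iff[of y p m n] unfolding R_def by auto
  next
    fix a
    assume a: "a \<in> (\<Union>\<sigma>\<in>Aut. {b \<in> topspace Pg. snd b \<in> R \<sigma>} \<times> {inv \<sigma> n})"
    obtain y p m where a_eq: "a = ((y, p), m)"
      by (metis prod.collapse)
    then show "a \<in> {a \<in> topspace PgN. Wcls act a \<in> sheet n}"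
      using a Wcls_in_sheet_iff[of y p m n] unfolding R_def by auto
  qed
  moreover have "openin PgN ({b \<in> topspace Pg. snd b \<in> R \<sigma>} \<times> {inv \<sigma> n})" if "bij \<sigma>" for \<sigma>
  proof -
    have "openin EGX (R \<sigma>)"
      unfolding R_def using slice_S that unfolding slice_def by (blast intro: openin_diag_act_image)
    then have "openin Pg {b \<in> topspace Pg. snd b \<in> R \<sigma>}"
      unfolding Pg_top_def
      by (intro openin_continuous_map_preimage[OF continuous_map_from_subtopology[OF continuous_map_snd]])
    then show ?thesis
      by (simp add: openin_prod_Times_iff)
  qed
  ultimately have "openin PgN {a \<in> topspace PgN. Wcls act a \<in> sheet n}"
    by auto
  then show ?thesis
    unfolding W_top_def openin_qtop using sheet_sub unfolding topspace_Wg by blast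
qed

lemma Union_sheets: "\<Union>(range sheet) = {w \<in> topspace Wg. piW w \<in> base}"
proof (intro set_eqI iffI)
  fix w
  assume "w \<in> \<Union>(range sheet)"
  then obtain n y where "y \<in> base" "w = lift n y"
    unfolding sheet_def by blast
  then show "w \<in> {w \<in> topspace Wg. piW w \<in> base}"
    using sheet_sub piW_lift unfolding sheet_def by auto
next
  fix w
  assume "w \<in> {w \<in> topspace Wg. piW w \<in> base}"
  then obtain y p m where a: "((y, p), m) \<in> topspace PgN" and w: "w = Wcls act ((y, p), m)"
    and "piW w \<in> base"
    unfolding topspace_Wg by auto
  then have y: "y \<in> base"
    using piW_Wcls by simp
  have p: "p \<in> topspace EGX" "g y = cls act p"
    using a by auto
  have "sec y \<in> topspace EGX" "cls act (sec y) = cls act p"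
    using sec_spec[OF y] S_sub p(2) by auto
  then obtain \<sigma> where \<sigma>: "\<sigma> \<in> Aut" "p = diag_act (sec y) \<sigma>"
    using cls_eq_iff[of "sec y" p] p(1) by blast
  then have "\<exists>\<tau>\<in>Aut. p \<in> (\<lambda>q. diag_act q \<tau>) ` S \<and> m = inv \<tau> (\<sigma> m)"
    using sec_spec[OF y] by (auto simp: bij_is_inj)
  then have "w \<in> sheet (\<sigma> m)"
    unfolding w using Wcls_in_sheet_iff[OF a] by blast
  then show "w \<in> \<Union>(range sheet)"
    by blast
qed

lemma sheet_index_unique:
  assumes "w \<in> sheet n" "w \<in> sheet m"
  shows "n = m"
proof -
  obtain y where y: "y \<in> base" and w: "w = Wcls act ((y, sec y), n)"
    using assms(1) unfolding sheet_def lift_def by blast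
  then obtain \<sigma> s where \<sigma>: "bij \<sigma>" and s: "s \<in> S" "sec y = diag_act s \<sigma>" and n: "n = inv \<sigma> m"
    using assms(2) Wcls_in_sheet_iff[OF sec_point_in_PgN[OF y]] by auto
  then have "\<sigma> = id"
    using slice_S sec_spec[OF y] unfolding slice_def by auto
  then show ?thesis
    using n by simp
qed

lemma disjoint_sheets: "pairwise disjnt (range sheet)"
  unfolding pairwise_def disjnt_def using sheet_index_unique by blast

lemma homeomorphic_map_sheet: "homeomorphic_map (subtopology Wg (sheet n)) (subtopology Y base) piW"
proof -
  have lift_piW: "lift n (piW w) = w" if "w \<in> sheet n" for w
    using that piW_lift unfolding sheet_def by auto
  have "continuous_map (subtopology Wg (sheet n)) (subtopology Y base) piW"
    unfolding continuous_map_in_subtopology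
    using continuous_map_from_subtopology[OF continuous_map_piW] piW_lift
    by (auto simp: sheet_def)
  moreover have "continuous_map (subtopology Y base) (subtopology Wg (sheet n)) (lift n)"
    unfolding continuous_map_in_subtopology using continuous_map_lift by (auto simp: sheet_def)
  ultimately have "homeomorphic_maps (subtopology Wg (sheet n)) (subtopology Y base) piW (lift n)"
    unfolding homeomorphic_maps_def using lift_piW piW_lift by auto
  then show ?thesis
    using homeomorphic_map_maps by blast
qed

lemma evenly_covered_base: "evenly_covered Wg Y piW base"
  unfolding evenly_covered_def
  using Union_sheets disjoint_sheets openin_sheet homeomorphic_map_sheet
  by (intro exI[of _ "range sheet"]) auto

lemma Pbar_g_eq_range_sec: "y \<in> base \<Longrightarrow> Pbar (g y) = range (snd (sec y))"
  using sec_spec S_sub by (intro Pbar_eq_range) auto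

lemma openin_lift_sec_preimage:
  assumes G: "openin Wg G" and N: "openin Xtop N"
  shows "openin Y {y \<in> base. lift n y \<in> G \<and> snd (sec y) \<in> N}"
proof -
  have "continuous_map (subtopology Y base) Xtop (snd \<circ> sec)"
    using continuous_map_sec continuous_map_snd by (rule continuous_map_compose)
  then have "openin (subtopology Y base) {y \<in> topspace (subtopology Y base). (snd \<circ> sec) y \<in> N}"
    using N by (rule openin_continuous_map_preimage)
  moreover have "openin (subtopology Y base) {y \<in> topspace (subtopology Y base). lift n y \<in> G}"
    using continuous_map_lift G by (rule openin_continuous_map_preimage)
  moreover have "{y \<in> base. lift n y \<in> G \<and> snd (sec y) \<in> N} =
      {y \<in> topspace (subtopology Y base). lift n y \<in> G} \<inter>
      {y \<in> topspace (subtopology Y base). (snd \<circ> sec) y \<in> N}"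
    using base_sub by auto
  ultimately have "openin (subtopology Y base) {y \<in> base. lift n y \<in> G \<and> snd (sec y) \<in> N}"
    by (simp only: openin_Int)
  then show ?thesis
    using openin_base by (rule openin_trans_full)
qed

lemma iotaW_lift_nhd:
  assumes G: "openin Wg G" and y0: "y0 \<in> base" and G0: "lift n y0 \<in> G"
  shows "\<exists>T. openin (subtopology (prod_topology Y euclidean) (Eg Y EG act g)) T \<and>
    iotaW (lift n y0) \<in> T \<and> T \<subseteq> iotaW ` G"
proof -
  define x0 where "x0 = snd (sec y0)"
  have "x0 \<in> Xset"
    unfolding x0_def using sec_spec[OF y0] S_sub by (auto simp: mem_Times_iff)
  then obtain N r where N: "openin Xtop N" "x0 \<in> N" "r > 0"
    and isolated: "\<And>x j. x \<in> N \<Longrightarrow> cmod (x j - x0 n) < r \<Longrightarrow> j = n"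
    using Xtop_nhd_isolating_coordinate[of x0 n] by blast
  define B where "B = {y \<in> base. lift n y \<in> G \<and> snd (sec y) \<in> N}"
  define T where "T = Eg Y EG act g \<inter> (B \<times> ball (x0 n) r)"
  have "openin (subtopology (prod_topology Y euclidean) (Eg Y EG act g)) T"
    unfolding T_def B_def using openin_lift_sec_preimage[OF G N(1)]
    by (intro openin_subtopology_Int2) (simp add: openin_prod_Times_iff)
  moreover have "iotaW (lift n y0) \<in> T"
  proof -
    have "lift n y0 \<in> topspace Wg"
      using sheet_sub y0 unfolding sheet_def by blast
    then have "iotaW (lift n y0) \<in> Eg Y EG act g"
      unfolding Eg_def by blast
    moreover have "y0 \<in> B"
      unfolding B_def using y0 G0 N(2) by (simp add: x0_def)
    ultimately show ?thesis
      unfolding T_def using iotaW_lift[OF y0] N(3) x0_def by simp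
  qed
  moreover have "T \<subseteq> iotaW ` G"
  proof
    fix q
    assume "q \<in> T"
    then obtain y z where q: "q = (y, z)" and y: "y \<in> B" and z: "z \<in> Pbar (g y)"
      and near: "cmod (z - x0 n) < r"
      unfolding T_def Eg_eq by (auto simp: dist_norm norm_minus_commute)
    have y_base: "y \<in> base"
      using y unfolding B_def by simp
    obtain j where j: "z = snd (sec y) j"
      using z Pbar_g_eq_range_sec[OF y_base] by auto
    then have "j = n"
      using isolated[of "snd (sec y)" j] y near unfolding B_def by auto
    then have "q = iotaW (lift n y)"
      using q j iotaW_lift[OF y_base] by simp
    then show "q \<in> iotaW ` G"
      using y unfolding B_def by auto
  qed
  ultimately show ?thesis
    by blast
qed

end

section \<open>The covering and the embedding\<close>

context pulled_back
begin

lemma covering_map_piW: "covering_map Wg Y piW"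
proof -
  have "topspace Y \<subseteq> piW ` topspace Wg"
  proof
    fix y
    assume y: "y \<in> topspace Y"
    then obtain p where "p \<in> topspace EGX" "g y = cls act p"
      using exists_cls_eq_g by blast
    then have a: "((y, p), 0) \<in> topspace PgN"
      using y by simp
    then have "Wcls act ((y, p), 0) \<in> topspace Wg"
      unfolding topspace_Wg by blast
    then show "y \<in> piW ` topspace Wg"
      using piW_Wcls[OF a] by (metis image_eqI)
  qed
  then have surj: "piW ` topspace Wg = topspace Y"
    using continuous_map_image_subset_topspace[OF continuous_map_piW] by blast
  have "\<exists>U. openin Y U \<and> b \<in> U \<and> evenly_covered Wg Y piW U" if b: "b \<in> topspace Y" for b
  proof -
    obtain p where p: "p \<in> topspace EGX" "g b = cls act p"
      using exists_cls_eq_g[OF b] by blast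
    then obtain S where S: "slice S" "p \<in> S"
      using exists_slice by blast
    interpret pulled_back_chart EG act Y g S
      using S(1) by unfold_locales
    have "b \<in> base"
      unfolding base_def using b p S(2) by blast
    then show ?thesis
      using openin_base evenly_covered_base by blast
  qed
  then show ?thesis
    unfolding covering_map_iff_evenly_covered by (intro conjI ballI continuous_map_piW surj)
qed

lemma open_map_iotaW: "open_map Wg (subtopology (prod_topology Y euclidean) (Eg Y EG act g)) iotaW"
  unfolding open_map_def
proof (intro allI impI)
  fix G
  assume G: "openin Wg G"
  show "openin (subtopology (prod_topology Y euclidean) (Eg Y EG act g)) (iotaW ` G)"
  proof (subst openin_subopen, intro ballI)
    fix q
    assume "q \<in> iotaW ` G"
    then obtain y p n where a: "((y, p), n) \<in> topspace PgN" and w: "Wcls act ((y, p), n) \<in> G"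
      and q: "q = iotaW (Wcls act ((y, p), n))"
      using openin_subset[OF G] unfolding topspace_Wg by auto
    have "p \<in> topspace EGX"
      using a by simp
    then obtain S where S: "slice S" "p \<in> S"
      using exists_slice by blast
    interpret pulled_back_chart EG act Y g S
      using S(1) by unfold_locales
    have y: "y \<in> base"
      unfolding base_def using a S(2) by auto
    then have "lift n y = Wcls act ((y, p), n)"
      unfolding lift_def using sec_unique[OF y S(2)] a by simp
    then show "\<exists>T. openin (subtopology (prod_topology Y euclidean) (Eg Y EG act g)) T \<and>
        q \<in> T \<and> T \<subseteq> iotaW ` G"
      using iotaW_lift_nhd[OF G y, of n] w q by simp
  qed
qed

lemma embedding_map_iotaW: "embedding_map Wg (prod_topology Y euclidean) iotaW"
  unfolding embedding_map_def
proof (rule bijective_open_imp_homeomorphic_map)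
  show "continuous_map Wg (subtopology (prod_topology Y euclidean) (iotaW ` topspace Wg)) iotaW"
    using continuous_map_iotaW by (simp add: continuous_map_in_subtopology)
  show "open_map Wg (subtopology (prod_topology Y euclidean) (iotaW ` topspace Wg)) iotaW"
    using open_map_iotaW unfolding Eg_def .
  show "iotaW ` topspace Wg = topspace (subtopology (prod_topology Y euclidean) (iotaW ` topspace Wg))"
    using continuous_map_image_subset_topspace[OF continuous_map_iotaW] by auto
  show "inj_on iotaW (topspace Wg)"
    by (rule inj_on_iotaW)
qed

lemma covering_map_Eg_fst: "covering_map (subtopology (prod_topology Y euclidean) (Eg Y EG act g)) Y fst"
proof -
  obtain j where j: "homeomorphic_maps Wg (subtopology (prod_topology Y euclidean) (Eg Y EG act g)) iotaW j"
    using embedding_map_iotaW unfolding embedding_map_def Eg_def homeomorphic_map_maps by blast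
  then have "covering_map (subtopology (prod_topology Y euclidean) (Eg Y EG act g)) Y (piW \<circ> j)"
    by (intro covering_map_compose_homeomorphic[OF covering_map_piW]) (simp add: homeomorphic_maps_map)
  moreover have "(piW \<circ> j) e = fst e" if "e \<in> topspace (subtopology (prod_topology Y euclidean) (Eg Y EG act g))" for e
    using that j unfolding homeomorphic_maps_def by (metis comp_apply fst_conv iotaW_def)
  ultimately show ?thesis
    by (rule covering_map_eq)
qed

end

theorem mainTheorem14:
  fixes Y :: "'y topology" and EG :: "'e topology"
    and act :: "'e \<Rightarrow> (nat \<Rightarrow> nat) \<Rightarrow> 'e"
    and g :: "'y \<Rightarrow> ('e \<times> (nat \<Rightarrow> complex)) set"
  assumes EG: "EG_space EG act"
    and Y: "Hausdorff_space Y"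
    and g: "continuous_map Y (XG_top EG act) g"
  shows "embedding_map (W_top Y EG act g) (prod_topology Y euclidean) iotaW
       \<and> (\<forall>w\<in>topspace (W_top Y EG act g). fst (iotaW w) = piW w)
       \<and> covering_map (W_top Y EG act g) Y piW
       \<and> covering_map (subtopology (prod_topology Y euclidean) (Eg Y EG act g)) Y fst
       \<and> Eg Y EG act g = {(y, z). y \<in> topspace Y \<and> z \<in> Pbar (g y)}
       \<and> closedin (prod_topology Y euclidean) (Eg Y EG act g)"
proof -
  interpret pulled_back EG act Y g
    using EG g by unfold_locales
  show ?thesis
    using embedding_map_iotaW covering_map_piW covering_map_Eg_fst Eg_eq closedin_Eg
    by (simp add: iotaW_def)
qed

end
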